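(* Let $f=f(x_1,\ldots,x_n)$ be a positive non-canalyzing Boolean function such that for every $i\in[n]$ both restrictions $f_{|x_i=0}$ and $f_{|x_i=1}$ are canalyzing. Then either there exists a minimal one $\mathbf{y}$ of $f$ of Hamming weight $2$ such that $\overline{\mathbf{y}}$ is a maximal zero of $f$, or $n=4$ and $f$ has exactly $6$ extremal points.
   Context: $B=\{0,1\}$, $\preceq$ coordinatewise order on $B^n$; $\overline{\mathbf{x}}$ denotes the complementary point ($(\overline{\mathbf{x}})_i=1$ iff $(\mathbf{x})_i=0$). $f$ is positive if $f(\mathbf{x})=1$ and $\mathbf{x}\preceq\mathbf{y}$ imply $f(\mathbf{y})=1$. Maximal zeros / minimal ones are $\preceq$-maximal false / $\preceq$-minimal true points; extremal points are both kinds together. $f_{|x_i=\alpha}$ is obtained by fixing $x_i=\alpha$. $f$ is canalyzing if for some $i$, $f_{|x_i=0}$ or $f_{|x_i=1}$ is constant. *)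

theory Defs
  imports Main
begin

text \<open>A Boolean function on a finite set V of variable indices is modelled as
  f :: (nat \<Rightarrow> bool) \<Rightarrow> bool, evaluated only on the points of B^V, i.e.
  assignments that are False outside V.\<close>

definition points :: "nat set \<Rightarrow> (nat \<Rightarrow> bool) set" where
  "points V = {x. \<forall>j. j \<notin> V \<longrightarrow> \<not> x j}"

definition positive_on :: "nat set \<Rightarrow> ((nat \<Rightarrow> bool) \<Rightarrow> bool) \<Rightarrow> bool" where
  "positive_on V f \<longleftrightarrow> (\<forall>x\<in>points V. \<forall>y\<in>points V. f x \<and> x \<le> y \<longrightarrow> f y)"

definition restr :: "((nat \<Rightarrow> bool) \<Rightarrow> bool) \<Rightarrow> nat \<Rightarrow> bool \<Rightarrow> ((nat \<Rightarrow> bool) \<Rightarrow> bool)" where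
  "restr f i a = (\<lambda>x. f (x(i := a)))"

definition constant_on :: "nat set \<Rightarrow> ((nat \<Rightarrow> bool) \<Rightarrow> bool) \<Rightarrow> bool" where
  "constant_on V g \<longleftrightarrow> (\<exists>c. \<forall>x\<in>points V. g x = c)"

definition canalyzing :: "nat set \<Rightarrow> ((nat \<Rightarrow> bool) \<Rightarrow> bool) \<Rightarrow> bool" where
  "canalyzing V f \<longleftrightarrow>
     (\<exists>i\<in>V. constant_on (V - {i}) (restr f i False) \<or> constant_on (V - {i}) (restr f i True))"

definition min_one :: "nat set \<Rightarrow> ((nat \<Rightarrow> bool) \<Rightarrow> bool) \<Rightarrow> (nat \<Rightarrow> bool) \<Rightarrow> bool" where
  "min_one V f x \<longleftrightarrow> x \<in> points V \<and> f x \<and> (\<forall>y\<in>points V. f y \<and> y \<le> x \<longrightarrow> y = x)"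

definition max_zero :: "nat set \<Rightarrow> ((nat \<Rightarrow> bool) \<Rightarrow> bool) \<Rightarrow> (nat \<Rightarrow> bool) \<Rightarrow> bool" where
  "max_zero V f x \<longleftrightarrow> x \<in> points V \<and> \<not> f x \<and> (\<forall>y\<in>points V. \<not> f y \<and> x \<le> y \<longrightarrow> y = x)"

definition extremal_points :: "nat set \<Rightarrow> ((nat \<Rightarrow> bool) \<Rightarrow> bool) \<Rightarrow> (nat \<Rightarrow> bool) set" where
  "extremal_points V f = {x. min_one V f x \<or> max_zero V f x}"

definition hweight :: "nat set \<Rightarrow> (nat \<Rightarrow> bool) \<Rightarrow> nat" where
  "hweight V x = card {j\<in>V. x j}"

definition complement :: "nat set \<Rightarrow> (nat \<Rightarrow> bool) \<Rightarrow> (nat \<Rightarrow> bool)" where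
  "complement V x = (\<lambda>j. j \<in> V \<and> \<not> x j)"

end

theory Submission
  imports Defs
begin

text \<open>A non-canalyzing positive f is false on every unit vector and true on every
  complement of one, since otherwise fixing that variable would make f constant.
  Canalyzingness of f|x_i=1 then yields a true pair {i,j}, and that of f|x_i=0 a
  false co-pair V - {i,j}.  A true pair whose co-pair is false is the required
  minimal one.  Otherwise the true pairs and the pairs with false co-pair form two
  edge-disjoint families covering V in which every edge of one meets every edge of
  the other, and this forces |V| = 4; there the extremal points are exactly the six
  points of weight 2.\<close>

definition point_of :: "nat set \<Rightarrow> nat \<Rightarrow> bool" where
  "point_of S = (\<lambda>k. k \<in> S)"

lemma point_of_le_iff [simp]: "point_of S \<le> point_of T \<longleftrightarrow> S \<subseteq> T"
  by (auto simp: point_of_def le_fun_def)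

lemma point_of_in_points [simp]: "point_of S \<in> points V \<longleftrightarrow> S \<subseteq> V"
  by (auto simp: point_of_def points_def)

lemma point_of_inject [simp]: "point_of S = point_of T \<longleftrightarrow> S = T"
  by (auto simp: point_of_def fun_eq_iff)

lemma pointsE:
  assumes "x \<in> points V"
  obtains S where "S \<subseteq> V" and "x = point_of S"
  using assms that[of "{k. x k}"] by (auto simp: points_def point_of_def)

lemma ball_points_iff: "(\<forall>x\<in>points V. P x) \<longleftrightarrow> (\<forall>S \<subseteq> V. P (point_of S))"
  by (metis pointsE point_of_in_points)

lemma restr_point_of:
  "restr f i b (point_of S) = f (point_of (if b then insert i S else S - {i}))"
  by (auto simp: restr_def point_of_def fun_eq_iff intro!: arg_cong[of _ _ f])

lemma complement_point_of: "complement V (point_of S) = point_of (V - S)"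
  by (auto simp: complement_def point_of_def)

lemma hweight_point_of: "hweight V (point_of S) = card (V \<inter> S)"
  by (simp add: hweight_def point_of_def Int_def conj_commute)

lemma positive_onD:
  "positive_on V f \<Longrightarrow> S \<subseteq> T \<Longrightarrow> T \<subseteq> V \<Longrightarrow> f (point_of S) \<Longrightarrow> f (point_of T)"
  unfolding positive_on_def by (metis point_of_in_points point_of_le_iff order_trans)

lemma constant_on_empty_full:
  "constant_on W g \<Longrightarrow> g (point_of {}) = g (point_of W)"
  unfolding constant_on_def by (metis empty_subsetI order_refl point_of_in_points)

lemma min_one_point_of_iff:
  "min_one V f (point_of S) \<longleftrightarrow>
     S \<subseteq> V \<and> f (point_of S) \<and> (\<forall>T \<subseteq> S. f (point_of T) \<longrightarrow> T = S)"
  unfolding min_one_def ball_points_iff by auto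

lemma max_zero_point_of_iff:
  "max_zero V f (point_of S) \<longleftrightarrow>
     S \<subseteq> V \<and> \<not> f (point_of S) \<and> (\<forall>T. S \<subseteq> T \<and> T \<subseteq> V \<and> \<not> f (point_of T) \<longrightarrow> T = S)"
  unfolding max_zero_def ball_points_iff by auto

lemma not_canalyzing_singleton:
  assumes pos: "positive_on V f" and nc: "\<not> canalyzing V f" and i: "i \<in> V"
  shows "\<not> f (point_of {i})"
proof
  assume "f (point_of {i})"
  then have "restr f i True (point_of S)" if "S \<subseteq> V - {i}" for S
    using i that positive_onD[OF pos, of "{i}" "insert i S"] by (auto simp: restr_point_of)
  then have "constant_on (V - {i}) (restr f i True)"
    unfolding constant_on_def ball_points_iff by blast
  with nc i show False
    unfolding canalyzing_def by blast
qed

lemma not_canalyzing_cosingleton: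
  assumes pos: "positive_on V f" and nc: "\<not> canalyzing V f" and i: "i \<in> V"
  shows "f (point_of (V - {i}))"
proof (rule ccontr)
  assume "\<not> f (point_of (V - {i}))"
  then have "\<not> restr f i False (point_of S)" if "S \<subseteq> V - {i}" for S
    using that positive_onD[OF pos, of "S - {i}" "V - {i}"] by (auto simp: restr_point_of)
  then have "constant_on (V - {i}) (restr f i False)"
    unfolding constant_on_def ball_points_iff by blast
  with nc i show False
    unfolding canalyzing_def by blast
qed

lemma not_canalyzing_full:
  assumes "positive_on V f" and "\<not> canalyzing V f" and "V \<noteq> {}"
  shows "f (point_of V)"
proof -
  obtain i where "i \<in> V" using \<open>V \<noteq> {}\<close> by blast
  then show ?thesis
    using assms positive_onD[of V f "V - {i}" V] not_canalyzing_cosingleton by blast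
qed

lemma not_canalyzing_empty:
  assumes "positive_on V f" and "\<not> canalyzing V f" and "V \<noteq> {}"
  shows "\<not> f (point_of {})"
proof
  obtain i where "i \<in> V" using \<open>V \<noteq> {}\<close> by blast
  moreover assume "f (point_of {})"
  ultimately show False
    using assms positive_onD[of V f "{}" "{i}"] not_canalyzing_singleton by blast
qed

text \<open>Of the face x_j = b on which g is constant, only its bottom and top points are kept.\<close>

lemma canalyzingE:
  assumes "canalyzing V g"
  obtains j b where "j \<in> V"
    and "g (point_of (if b then {j} else {})) = g (point_of (if b then V else V - {j}))"
proof -
  obtain j b where j: "j \<in> V" and const: "constant_on (V - {j}) (restr g j b)"
    using assms unfolding canalyzing_def by blast
  from const have "restr g j b (point_of {}) = restr g j b (point_of (V - {j}))"
    by (rule constant_on_empty_full)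
  with j have "g (point_of (if b then {j} else {})) = g (point_of (if b then V else V - {j}))"
    by (cases b) (simp_all add: restr_point_of insert_absorb)
  with j show thesis by (rule that)
qed

lemma canalyzing_restr_True_true_pair:
  assumes pos: "positive_on V f" and nc: "\<not> canalyzing V f" and i: "i \<in> V"
    and "canalyzing (V - {i}) (restr f i True)"
  shows "\<exists>j\<in>V - {i}. f (point_of {i, j})"
proof -
  obtain j b where j: "j \<in> V - {i}" and eq:
    "restr f i True (point_of (if b then {j} else {})) =
     restr f i True (point_of (if b then V - {i} else V - {i} - {j}))"
    using assms(4) by (rule canalyzingE)
  show ?thesis
  proof (cases b)
    case True
    with eq i have "f (point_of {i, j}) = f (point_of V)"
      by (simp add: restr_point_of insert_absorb)
    with j pos nc i show ?thesis
      using not_canalyzing_full by blast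
  next
    case False
    moreover have "insert i (V - {i} - {j}) = V - {j}"
      using i j by auto
    ultimately have "f (point_of {i}) = f (point_of (V - {j}))"
      using eq by (simp add: restr_point_of)
    with j pos nc i show ?thesis
      using not_canalyzing_singleton not_canalyzing_cosingleton by blast
  qed
qed

lemma canalyzing_restr_False_false_copair:
  assumes pos: "positive_on V f" and nc: "\<not> canalyzing V f" and i: "i \<in> V"
    and "canalyzing (V - {i}) (restr f i False)"
  shows "\<exists>j\<in>V - {i}. \<not> f (point_of (V - {i, j}))"
proof -
  obtain j b where j: "j \<in> V - {i}" and eq:
    "restr f i False (point_of (if b then {j} else {})) =
     restr f i False (point_of (if b then V - {i} else V - {i} - {j}))"
    using assms(4) by (rule canalyzingE)
  show ?thesis
  proof (cases b)
    case True
    with eq j have "f (point_of {j}) = f (point_of (V - {i}))"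
      by (simp add: restr_point_of)
    with j pos nc i show ?thesis
      using not_canalyzing_singleton not_canalyzing_cosingleton by blast
  next
    case False
    with eq have "f (point_of {}) = f (point_of (V - {i, j}))"
      by (simp add: restr_point_of Diff_insert2 [symmetric] insert_commute)
    with j pos nc i show ?thesis
      using not_canalyzing_empty by blast
  qed
qed

text \<open>Fix a with T-edge aj and F-edges ak, jl.  Any further vertex has a T-edge meeting both
  ak and jl, which forces k = l; so either V = {a,j,k,l}, or k = l and all remaining vertices
  are the single vertex v whose F-edge must meet aj.\<close>

lemma cross_intersecting_pair_covers_card_eq_4:
  fixes V :: "'a set" and T F :: "'a set \<Rightarrow> bool"
  assumes "V \<noteq> {}"
    and T_cover: "\<forall>i\<in>V. \<exists>j\<in>V - {i}. T {i, j}"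
    and F_cover: "\<forall>i\<in>V. \<exists>j\<in>V - {i}. F {i, j}"
    and disjoint: "\<And>a b. a \<in> V \<Longrightarrow> b \<in> V \<Longrightarrow> T {a, b} \<Longrightarrow> \<not> F {a, b}"
    and intersect: "\<And>a b c d. {a, b, c, d} \<subseteq> V \<Longrightarrow> T {a, b} \<Longrightarrow> F {c, d} \<Longrightarrow>
                      {a, b} \<inter> {c, d} \<noteq> {}"
  shows "card V = 4"
proof -
  obtain a where a: "a \<in> V" using \<open>V \<noteq> {}\<close> by blast
  obtain j where j: "j \<in> V - {a}" "T {a, j}" using T_cover a by blast
  obtain k where k: "k \<in> V - {a}" "F {a, k}" using F_cover a by blast
  obtain l where l: "l \<in> V - {j}" "F {j, l}" using F_cover j by blast
  have "k \<noteq> j" using disjoint a j k by blast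
  have "l \<noteq> a" using disjoint a j l by (metis Diff_iff insert_commute)
  have outside: "k = l \<and> T {v, k}" if v: "v \<in> V - {a, j, k, l}" for v
  proof -
    obtain w where w: "w \<in> V - {v}" "T {v, w}" using T_cover v by blast
    have "w \<in> {a, k}" using intersect[OF _ w(2) k(2)] a k v w by auto
    moreover have "w \<in> {j, l}" using intersect[OF _ w(2) l(2)] j l v w by auto
    ultimately show ?thesis using w \<open>k \<noteq> j\<close> \<open>l \<noteq> a\<close> j(1) by auto
  qed
  show ?thesis
  proof (cases "k = l")
    case False
    then have "V = {a, j, k, l}" using outside a j k l by blast
    then show ?thesis using j k l \<open>k \<noteq> j\<close> \<open>l \<noteq> a\<close> False by auto
  next
    case True
    have "\<exists>v. v \<in> V - {a, j, k}"
    proof (rule ccontr)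
      assume "\<nexists>v. v \<in> V - {a, j, k}"
      moreover obtain w where "w \<in> V - {k}" "T {k, w}" using T_cover k by blast
      ultimately show False
        using disjoint a j k l True by (auto simp: insert_commute)
    qed
    then obtain v where v: "v \<in> V - {a, j, k}" by blast
    obtain u where u: "u \<in> V - {v}" "F {v, u}" using F_cover v by blast
    have "u \<in> {a, j}" using intersect[OF _ j(2) u(2)] a j v u by auto
    have "v' = v" if v': "v' \<in> V - {a, j, k}" for v'
      using intersect[of v' k v u] outside[of v'] v' v u k \<open>u \<in> {a, j}\<close> \<open>k \<noteq> j\<close> True by auto
    then have "V = {a, j, k, v}" using a j k v by blast
    then show ?thesis using j k v \<open>k \<noteq> j\<close> by auto
  qed
qed

lemma min_one_pair:
  assumes pos: "positive_on V f" and sing: "\<forall>k\<in>V. \<not> f (point_of {k})"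
    and "{i, j} \<subseteq> V" and "f (point_of {i, j})"
  shows "min_one V f (point_of {i, j})"
proof -
  have "T = {i, j}" if "T \<subseteq> {i, j}" and "f (point_of T)" for T
  proof (rule ccontr)
    assume "T \<noteq> {i, j}"
    with \<open>T \<subseteq> {i, j}\<close> have "T \<subseteq> {i} \<or> T \<subseteq> {j}" by blast
    then show False
      using positive_onD[OF pos _ _ \<open>f (point_of T)\<close>] sing \<open>{i, j} \<subseteq> V\<close> by blast
  qed
  with assms show ?thesis by (simp add: min_one_point_of_iff)
qed

lemma max_zero_copair:
  assumes pos: "positive_on V f" and cosing: "\<forall>k\<in>V. f (point_of (V - {k}))"
    and "{i, j} \<subseteq> V" and "\<not> f (point_of (V - {i, j}))"
  shows "max_zero V f (point_of (V - {i, j}))"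
proof -
  have "T = V - {i, j}" if "V - {i, j} \<subseteq> T" "T \<subseteq> V" and "\<not> f (point_of T)" for T
  proof (rule ccontr)
    assume "T \<noteq> V - {i, j}"
    with that have "V - {j} \<subseteq> T \<or> V - {i} \<subseteq> T" by blast
    then show False
      using positive_onD[OF pos _ \<open>T \<subseteq> V\<close>] that(3) cosing \<open>{i, j} \<subseteq> V\<close> by blast
  qed
  with assms show ?thesis by (simp add: max_zero_point_of_iff)
qed

lemma true_pair_false_copair_witness:
  assumes pos: "positive_on V f" and nc: "\<not> canalyzing V f"
    and "i \<in> V" "j \<in> V" "f (point_of {i, j})" "\<not> f (point_of (V - {i, j}))"
  shows "min_one V f (point_of {i, j}) \<and> hweight V (point_of {i, j}) = 2
           \<and> max_zero V f (complement V (point_of {i, j}))"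
proof -
  have "i \<noteq> j" using assms not_canalyzing_singleton by fastforce
  with assms show ?thesis
    by (simp add: min_one_pair max_zero_copair not_canalyzing_singleton not_canalyzing_cosingleton
        hweight_point_of complement_point_of Int_absorb1)
qed

lemma card_le_1_subset_singletonE:
  assumes "finite S" "card S \<le> 1" "S \<subseteq> V" "V \<noteq> {}"
  obtains i where "i \<in> V" and "S \<subseteq> {i}"
proof (cases "S = {}")
  case True
  with \<open>V \<noteq> {}\<close> that show thesis by blast
next
  case False
  with assms have "card S = 1" by (simp add: le_Suc_eq)
  then obtain i where "S = {i}" by (rule card_1_singletonE)
  with \<open>S \<subseteq> V\<close> that show thesis by blast
qed

lemma card_ge_cosingleton_subsetE:
  assumes "finite V" "S \<subseteq> V" "card V \<le> Suc (card S)" "V \<noteq> {}"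
  obtains d where "d \<in> V" and "V - {d} \<subseteq> S"
proof (cases "S = V")
  case True
  with \<open>V \<noteq> {}\<close> that show thesis by blast
next
  case False
  then obtain d where d: "d \<in> V" "d \<notin> S" using \<open>S \<subseteq> V\<close> by blast
  with assms have "S = V - {d}"
    by (intro card_seteq) (auto simp: card_Diff_singleton)
  with d that show thesis by blast
qed

lemma min_one_card_eq_2:
  assumes "finite V" "card V = 4" "positive_on V f"
    and sing: "\<forall>k\<in>V. \<not> f (point_of {k})"
    and true_pair: "\<forall>d\<in>V. \<exists>P \<subseteq> V - {d}. card P = 2 \<and> f (point_of P)"
    and "min_one V f (point_of S)"
  shows "card S = 2"
proof -
  have S: "S \<subseteq> V" "f (point_of S)"
    and minimal: "\<And>T. T \<subseteq> S \<Longrightarrow> f (point_of T) \<Longrightarrow> T = S"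
    using \<open>min_one V f (point_of S)\<close> by (auto simp: min_one_point_of_iff)
  have "finite S" "V \<noteq> {}" using S \<open>finite V\<close> \<open>card V = 4\<close> finite_subset by auto
  show ?thesis
  proof (rule ccontr)
    assume "card S \<noteq> 2"
    then consider "card S \<le> 1" | "card V \<le> Suc (card S)"
      using \<open>card V = 4\<close> by linarith
    then show False
    proof cases
      case 1
      obtain i where "i \<in> V" "S \<subseteq> {i}"
        using \<open>finite S\<close> 1 S(1) \<open>V \<noteq> {}\<close> by (rule card_le_1_subset_singletonE)
      with S have "f (point_of {i})" using positive_onD[OF \<open>positive_on V f\<close>] by blast
      with sing \<open>i \<in> V\<close> show False by blast
    next
      case 2
      obtain d where "d \<in> V" "V - {d} \<subseteq> S"
        using \<open>finite V\<close> S(1) 2 \<open>V \<noteq> {}\<close> by (rule card_ge_cosingleton_subsetE)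
      then obtain P where "P \<subseteq> V - {d}" "card P = 2" "f (point_of P)" using true_pair by blast
      with \<open>V - {d} \<subseteq> S\<close> have "P = S" using minimal by blast
      with \<open>card P = 2\<close> \<open>card S \<noteq> 2\<close> show False by simp
    qed
  qed
qed

lemma max_zero_card_eq_2:
  assumes "finite V" "card V = 4" "positive_on V f"
    and cosing: "\<forall>k\<in>V. f (point_of (V - {k}))"
    and false_pair: "\<forall>i\<in>V. \<exists>j\<in>V - {i}. \<not> f (point_of {i, j})"
    and "max_zero V f (point_of S)"
  shows "card S = 2"
proof -
  have S: "S \<subseteq> V" "\<not> f (point_of S)"
    and maximal: "\<And>T. S \<subseteq> T \<Longrightarrow> T \<subseteq> V \<Longrightarrow> \<not> f (point_of T) \<Longrightarrow> T = S"
    using \<open>max_zero V f (point_of S)\<close> by (auto simp: max_zero_point_of_iff)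
  have "finite S" "V \<noteq> {}" using S \<open>finite V\<close> \<open>card V = 4\<close> finite_subset by auto
  show ?thesis
  proof (rule ccontr)
    assume "card S \<noteq> 2"
    then consider "card S \<le> 1" | "card V \<le> Suc (card S)"
      using \<open>card V = 4\<close> by linarith
    then show False
    proof cases
      case 1
      obtain i where "i \<in> V" "S \<subseteq> {i}"
        using \<open>finite S\<close> 1 S(1) \<open>V \<noteq> {}\<close> by (rule card_le_1_subset_singletonE)
      moreover from \<open>i \<in> V\<close> obtain j where "j \<in> V - {i}" "\<not> f (point_of {i, j})"
        using false_pair by blast
      ultimately have "{i, j} = S" using maximal[of "{i, j}"] by blast
      then show False using \<open>card S \<noteq> 2\<close> \<open>j \<in> V - {i}\<close> by auto
    next
      case 2
      obtain d where "d \<in> V" "V - {d} \<subseteq> S"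
        using \<open>finite V\<close> S(1) 2 \<open>V \<noteq> {}\<close> by (rule card_ge_cosingleton_subsetE)
      then have "f (point_of S)"
        using positive_onD[OF \<open>positive_on V f\<close> _ S(1)] cosing by blast
      with S(2) show False by contradiction
    qed
  qed
qed

lemma extremal_points_eq_pairs:
  assumes "finite V" "card V = 4"
    and pos: "positive_on V f"
    and sing: "\<forall>k\<in>V. \<not> f (point_of {k})"
    and cosing: "\<forall>k\<in>V. f (point_of (V - {k}))"
    and false_pair: "\<forall>i\<in>V. \<exists>j\<in>V - {i}. \<not> f (point_of {i, j})"
    and true_pair: "\<forall>d\<in>V. \<exists>P \<subseteq> V - {d}. card P = 2 \<and> f (point_of P)"
  shows "extremal_points V f = point_of ` {P. P \<subseteq> V \<and> card P = 2}"
proof (intro equalityI subsetI)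
  fix x assume "x \<in> extremal_points V f"
  then have "x \<in> points V" and extremal: "min_one V f x \<or> max_zero V f x"
    by (auto simp: extremal_points_def min_one_def max_zero_def)
  from \<open>x \<in> points V\<close> obtain S where "S \<subseteq> V" "x = point_of S" by (rule pointsE)
  moreover have "card S = 2"
    using extremal min_one_card_eq_2[OF assms(1-3) sing true_pair]
      max_zero_card_eq_2[OF assms(1-3) cosing false_pair] \<open>x = point_of S\<close> by blast
  ultimately show "x \<in> point_of ` {P. P \<subseteq> V \<and> card P = 2}" by blast
next
  fix x assume "x \<in> point_of ` {P. P \<subseteq> V \<and> card P = 2}"
  then obtain P where x: "x = point_of P" and P: "P \<subseteq> V" "card P = 2" by blast
  show "x \<in> extremal_points V f"
  proof (cases "f (point_of P)")
    case True
    from P obtain i j where "P = {i, j}" by (auto simp: card_2_iff)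
    with P True have "min_one V f x"
      using min_one_pair[OF pos sing] x by simp
    then show ?thesis by (simp add: extremal_points_def)
  next
    case False
    have "card (V - P) = 2"
      using P \<open>finite V\<close> \<open>card V = 4\<close> by (simp add: card_Diff_subset finite_subset)
    then obtain c d where cd: "V - P = {c, d}" by (auto simp: card_2_iff)
    then have "P = V - {c, d}" using P by blast
    with False cd have "max_zero V f x"
      using max_zero_copair[OF pos cosing, of c d] x by blast
    then show ?thesis by (simp add: extremal_points_def)
  qed
qed

lemma card_extremal_points_eq_6:
  assumes "finite V" "card V = 4" "positive_on V f"
    and "\<forall>k\<in>V. \<not> f (point_of {k})"
    and "\<forall>k\<in>V. f (point_of (V - {k}))"
    and "\<forall>i\<in>V. \<exists>j\<in>V - {i}. \<not> f (point_of {i, j})"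
    and "\<forall>d\<in>V. \<exists>P \<subseteq> V - {d}. card P = 2 \<and> f (point_of P)"
  shows "card (extremal_points V f) = 6"
proof -
  have "card (extremal_points V f) = card {P. P \<subseteq> V \<and> card P = 2}"
    using extremal_points_eq_pairs[OF assms] by (simp add: card_image inj_on_def)
  also have "\<dots> = 6"
    using assms(1,2) by (simp add: n_subsets numeral_eq_Suc)
  finally show ?thesis .
qed

lemma card_eq_4_if_no_good_pair:
  assumes pos: "positive_on V f" and "V \<noteq> {}"
    and "\<forall>i\<in>V. \<exists>j\<in>V - {i}. f (point_of {i, j})"
    and "\<forall>i\<in>V. \<exists>j\<in>V - {i}. \<not> f (point_of (V - {i, j}))"
    and "\<forall>i\<in>V. \<forall>j\<in>V. f (point_of {i, j}) \<longrightarrow> f (point_of (V - {i, j}))"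
  shows "card V = 4"
proof (rule cross_intersecting_pair_covers_card_eq_4
    [of V "\<lambda>P. f (point_of P)" "\<lambda>P. \<not> f (point_of (V - P))"])
  fix a b c d
  assume "{a, b, c, d} \<subseteq> V" "f (point_of {a, b})" "\<not> f (point_of (V - {c, d}))"
  then show "{a, b} \<inter> {c, d} \<noteq> {}"
    using positive_onD[OF pos, of "{a, b}" "V - {c, d}"] by blast
qed (use assms in auto)

lemma card_extremal_points_if_no_good_pair:
  assumes "finite V" "card V = 4"
    and pos: "positive_on V f" and nc: "\<not> canalyzing V f"
    and true_cover: "\<forall>i\<in>V. \<exists>j\<in>V - {i}. f (point_of {i, j})"
    and false_cover: "\<forall>i\<in>V. \<exists>j\<in>V - {i}. \<not> f (point_of (V - {i, j}))"
    and no_good: "\<forall>i\<in>V. \<forall>j\<in>V. f (point_of {i, j}) \<longrightarrow> f (point_of (V - {i, j}))"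
  shows "card (extremal_points V f) = 6"
proof (rule card_extremal_points_eq_6[OF assms(1-3)])
  show "\<forall>k\<in>V. \<not> f (point_of {k})" "\<forall>k\<in>V. f (point_of (V - {k}))"
    using pos nc by (simp_all add: not_canalyzing_singleton not_canalyzing_cosingleton)
  show "\<forall>i\<in>V. \<exists>j\<in>V - {i}. \<not> f (point_of {i, j})"
    using false_cover no_good by blast
  show "\<forall>d\<in>V. \<exists>P \<subseteq> V - {d}. card P = 2 \<and> f (point_of P)"
  proof
    fix d assume "d \<in> V"
    then have "card (V - {d}) = 3" using \<open>card V = 4\<close> by (simp add: card_Diff_singleton)
    then obtain v where v: "v \<in> V - {d}" by (metis card.empty ex_in_conv zero_neq_numeral)
    then obtain w where w: "w \<in> V - {v}" "f (point_of {v, w})" using true_cover by blast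
    show "\<exists>P \<subseteq> V - {d}. card P = 2 \<and> f (point_of P)"
    proof (cases "w = d")
      case False
      with v w show ?thesis by (intro exI[of _ "{v, w}"]) auto
    next
      case True
      have "card (V - {v, d}) = 2"
        using v \<open>d \<in> V\<close> \<open>finite V\<close> \<open>card V = 4\<close> by (simp add: card_Diff_subset)
      with True v w no_good show ?thesis by (intro exI[of _ "V - {v, d}"]) auto
    qed
  qed
qed

theorem mainTheorem6:
  fixes f :: "(nat \<Rightarrow> bool) \<Rightarrow> bool" and n :: nat
  assumes "n \<ge> 1"
    and "positive_on {..<n} f"
    and "\<not> canalyzing {..<n} f"
    and "\<forall>i<n. canalyzing ({..<n} - {i}) (restr f i False)
                 \<and> canalyzing ({..<n} - {i}) (restr f i True)"
  shows "(\<exists>y. min_one {..<n} f y \<and> hweight {..<n} y = 2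
              \<and> max_zero {..<n} f (complement {..<n} y))
         \<or> (n = 4 \<and> card (extremal_points {..<n} f) = 6)"
proof -
  let ?V = "{..<n}"
  note pos = assms(2) and nc = assms(3)
  have true_cover: "\<forall>i\<in>?V. \<exists>j\<in>?V - {i}. f (point_of {i, j})"
    using canalyzing_restr_True_true_pair[OF pos nc] assms(4) by blast
  have false_cover: "\<forall>i\<in>?V. \<exists>j\<in>?V - {i}. \<not> f (point_of (?V - {i, j}))"
    using canalyzing_restr_False_false_copair[OF pos nc] assms(4) by blast
  show ?thesis
  proof (cases "\<forall>i\<in>?V. \<forall>j\<in>?V. f (point_of {i, j}) \<longrightarrow> f (point_of (?V - {i, j}))")
    case True
    have "?V \<noteq> {}" using assms(1) by (simp add: lessThan_empty_iff)
    then have "card ?V = 4"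
      using card_eq_4_if_no_good_pair[OF pos _ true_cover false_cover True] by blast
    then show ?thesis
      using card_extremal_points_if_no_good_pair[OF _ _ pos nc true_cover false_cover True] by simp
  next
    case False
    then obtain i j where "i \<in> ?V" "j \<in> ?V" "f (point_of {i, j})" "\<not> f (point_of (?V - {i, j}))"
      by blast
    then show ?thesis
      using true_pair_false_copair_witness[OF pos nc] by blast
  qed
qed

end
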